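(* Consider the Lohe hermitian sphere model $$\dot z_j=\Omega_jz_j+\kappa_0\big(z_c\langle z_j,z_j\rangle-z_j\langle z_c,z_j\rangle\big)+\kappa_1\big(\langle z_j,z_c\rangle-\langle z_c,z_j\rangle\big)z_j,\qquad j=1,\dots,N.$$ Assume the following hold: - $\Omega_j=\Omega$ for all $j$, for a skew-hermitian $d\times d$ matrix $\Omega$; - $0<\kappa_1<\frac14\kappa_0$; - $|z_j^0|=1$ for all $j$; - $\rho^0>\frac{N-2}{N}$. Let $\{z_j\}$ be the global solution with $z_j(0)=z_j^0$. Then for all $i,j$, $\langle z_i(t),z_j(t)\rangle\to1$ exponentially fast as $t\to\infty$. In particular $\max_{i,j}|z_i(t)-z_j(t)|\to0$ exponentially fast.
   Context: Notation: - $\langle z,w\rangle=\sum_\alpha\overline{z_\alpha}w_\alpha$ on $\mathbb C^d$, and $|z|=\langle z,z\rangle^{1/2}$; - $z_c:=\frac1N\sum_kz_k$; - the $\Omega_j$ are skew-hermitian matrices; - $\kappa_0,\kappa_1$ are real coupling constants; - $\rho^0:=\big|\frac1N\sum_{j=1}^Nz_j^0\big|$. *)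

theory Defs
  imports "HOL-Analysis.Analysis"
begin

definition hinner :: "complex^'d \<Rightarrow> complex^'d \<Rightarrow> complex" where
  "hinner z w = (\<Sum>\<alpha>\<in>UNIV. cnj (z $ \<alpha>) * w $ \<alpha>)"

text \<open>Centroid z_c = (1/N) sum_{k<N} z_k (particles indexed by 0..N-1).\<close>
definition centroid :: "nat \<Rightarrow> (nat \<Rightarrow> complex^'d) \<Rightarrow> complex^'d" where
  "centroid N z = (1 / real N) *\<^sub>R (\<Sum>k<N. z k)"

definition skew_hermitian :: "complex^'d^'d \<Rightarrow> bool" where
  "skew_hermitian A \<longleftrightarrow> (\<forall>i j. A $ i $ j = - cnj (A $ j $ i))"

definition lohe_rhs :: "complex^'d^'d \<Rightarrow> real \<Rightarrow> real \<Rightarrow> nat \<Rightarrow> (nat \<Rightarrow> complex^'d) \<Rightarrow> nat \<Rightarrow> complex^'d" where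
  "lohe_rhs \<Omega> \<kappa>0 \<kappa>1 N z j =
     (let zc = centroid N z in
      \<Omega> *v z j
      + of_real \<kappa>0 *s (hinner (z j) (z j) *s zc - hinner zc (z j) *s z j)
      + (of_real \<kappa>1 * (hinner (z j) zc - hinner zc (z j))) *s z j)"

end

theory Submission
  imports Defs
begin

text \<open>The Lohe vector field is tangent to the sphere, so every \<open>|z\<^sub>j|\<close> stays \<open>1\<close>. For the
  order parameter \<open>\<rho> = |z\<^sub>c|\<close> one has \<open>d/dt \<rho>\<^sup>2 = (2/N) \<Sum>\<^sub>j Re \<langle>z\<^sub>c, \<dot>z\<^sub>j\<rangle>\<close>, where the
  \<open>\<Omega>\<close>-terms cancel after summation and the \<open>\<kappa>\<^sub>1\<close>-terms are nonnegative; what remains is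
  \<open>\<kappa>\<^sub>0 \<Sum>\<^sub>j (\<rho>\<^sup>2 - a\<^sub>j\<^sup>2)\<close> with \<open>a\<^sub>j = Re \<langle>z\<^sub>c, z\<^sub>j\<rangle>\<close>. Since \<open>|a\<^sub>j| \<le> \<rho>\<close>, \<open>\<rho>\<close> never decreases;
  since moreover \<open>\<Sum>\<^sub>j a\<^sub>j = N\<rho>\<^sup>2\<close>, each \<open>a\<^sub>j\<close> is at least \<open>N\<rho>\<^sup>2 - (N-1)\<rho>\<close>, which yields
  \<open>\<Sum>\<^sub>j (\<rho>\<^sup>2 - a\<^sub>j\<^sup>2) \<ge> N\<rho>\<^sup>2(N\<rho> - N + 2)(1 - \<rho>)\<close>. Once \<open>\<rho>\<^sup>0 > (N-2)/N\<close> this is a logistic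
  inequality with rate bounded below, so \<open>1 - \<rho>\<^sup>2\<close> decays exponentially (Gronwall), and the
  identity \<open>\<Sum>\<^sub>j |z\<^sub>j - z\<^sub>c|\<^sup>2 = N(1 - \<rho>\<^sup>2)\<close> transfers the decay to \<open>|z\<^sub>i - z\<^sub>j|\<close> and to
  \<open>|1 - \<langle>z\<^sub>i, z\<^sub>j\<rangle>|\<close>.\<close>

lemma has_real_derivative_nonneg_imp_mono:
  fixes f f' :: "real \<Rightarrow> real"
  assumes deriv: "\<And>t. a \<le> t \<Longrightarrow> (f has_real_derivative f' t) (at t within {a..})"
    and nonneg: "\<And>t. a \<le> t \<Longrightarrow> 0 \<le> f' t"
    and "a \<le> s" "s \<le> t"
  shows "f s \<le> f t"
proof (rule DERIV_nonneg_imp_increasing_open[OF \<open>s \<le> t\<close>])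
  fix x assume x: "s < x" "x < t"
  then have "at x within {a..} = at x"
    using \<open>a \<le> s\<close> by (intro at_within_interior) auto
  then show "\<exists>y. (f has_real_derivative y) (at x) \<and> 0 \<le> y"
    using deriv[of x] nonneg[of x] x \<open>a \<le> s\<close> by auto
next
  have "continuous_on {a..} f"
    unfolding continuous_on_eq_continuous_within using deriv DERIV_continuous by blast
  then show "continuous_on {s..t} f"
    by (rule continuous_on_subset) (use \<open>a \<le> s\<close> in auto)
qed

lemma has_real_derivative_le_linear_imp_exp_decay:
  fixes V V' :: "real \<Rightarrow> real"
  assumes deriv: "\<And>t. 0 \<le> t \<Longrightarrow> (V has_real_derivative V' t) (at t within {0..})"
    and decay: "\<And>t. 0 \<le> t \<Longrightarrow> V' t \<le> - c * V t"
    and "0 \<le> t"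
  shows "V t \<le> V 0 * exp (- c * t)"
proof -
  have "- (V 0 * exp (c * 0)) \<le> - (V t * exp (c * t))"
  proof (rule has_real_derivative_nonneg_imp_mono
      [where f = "\<lambda>s. - (V s * exp (c * s))" and f' = "\<lambda>s. - ((V' s + c * V s) * exp (c * s))"])
    fix s :: real assume "0 \<le> s"
    show "((\<lambda>s. - (V s * exp (c * s))) has_real_derivative - ((V' s + c * V s) * exp (c * s)))
        (at s within {0..})"
      using deriv[OF \<open>0 \<le> s\<close>] by (auto intro!: derivative_eq_intros simp: algebra_simps)
    show "0 \<le> - ((V' s + c * V s) * exp (c * s))"
      using decay[OF \<open>0 \<le> s\<close>] by (simp add: mult_nonpos_nonneg)
  qed (use \<open>0 \<le> t\<close> in auto)
  then have "V t * exp (c * t) * exp (- c * t) \<le> V 0 * exp (- c * t)"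
    by (intro mult_right_mono) auto
  then show ?thesis by (simp add: mult.assoc exp_add[symmetric])
qed

lemma has_vector_derivative_inner_self:
  assumes "(g has_vector_derivative g') (at t within S)"
  shows "((\<lambda>s. g s \<bullet> g s) has_real_derivative 2 * (g t \<bullet> g')) (at t within S)"
proof -
  have "(g has_derivative (\<lambda>h. h *\<^sub>R g')) (at t within S)"
    using assms by (simp add: has_vector_derivative_def)
  from has_derivative_inner[OF this this]
  show ?thesis unfolding has_field_derivative_def
    by (rule has_derivative_eq_rhs) (auto simp: inner_commute algebra_simps)
qed

lemma Re_hinner: "Re (hinner z w) = z \<bullet> w"
  unfolding hinner_def inner_vec_def by (simp add: Re_sum inner_complex_def)

lemma hinner_self: "hinner z z = complex_of_real ((norm z)\<^sup>2)"
proof (rule complex_eqI)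
  show "Re (hinner z z) = Re (complex_of_real ((norm z)\<^sup>2))"
    by (simp add: Re_hinner power2_norm_eq_inner)
  show "Im (hinner z z) = Im (complex_of_real ((norm z)\<^sup>2))"
    unfolding hinner_def by (simp add: Im_sum algebra_simps)
qed

lemma cnj_hinner: "cnj (hinner z w) = hinner w z"
  unfolding hinner_def by (simp add: mult.commute)

lemma hinner_add_right: "hinner z (a + b) = hinner z a + hinner z b"
  unfolding hinner_def by (simp add: algebra_simps sum.distrib)

lemma hinner_diff_right: "hinner z (a - b) = hinner z a - hinner z b"
  unfolding hinner_def by (simp add: algebra_simps sum_subtractf)

lemma hinner_smult_right: "hinner z (c *s b) = c * hinner z b"
  unfolding hinner_def by (simp add: algebra_simps sum_distrib_left)

lemma hinner_scaleR_right: "hinner z (r *\<^sub>R b) = of_real r * hinner z b"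
  unfolding hinner_def
  by (simp only: vector_scaleR_component)
     (simp add: scaleR_conv_of_real sum_distrib_left algebra_simps)

lemma hinner_sum_right: "hinner z (sum f A) = (\<Sum>a\<in>A. hinner z (f a))"
  unfolding hinner_def
  by (induct A rule: infinite_finite_induct) (auto simp: algebra_simps sum.distrib)

lemma norm_hinner_le: "cmod (hinner z w) \<le> norm z * norm w"
proof -
  have "cmod (hinner z w) \<le> (\<Sum>a\<in>UNIV. cmod (cnj (z$a) * w$a))"
    unfolding hinner_def by (rule norm_sum)
  also have "\<dots> = (\<Sum>a\<in>UNIV. \<bar>norm (z$a)\<bar> * \<bar>norm (w$a)\<bar>)"
    by (simp add: norm_mult)
  also have "\<dots> \<le> L2_set (\<lambda>a. norm (z$a)) UNIV * L2_set (\<lambda>a. norm (w$a)) UNIV"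
    by (rule L2_set_mult_ineq)
  finally show ?thesis by (simp add: norm_vec_def)
qed

lemma norm_one_minus_hinner_le:
  assumes "norm z = 1"
  shows "cmod (1 - hinner z w) \<le> norm (z - w)"
proof -
  have "1 - hinner z w = hinner z (z - w)"
    using assms by (simp add: hinner_diff_right hinner_self)
  then show ?thesis
    using norm_hinner_le[of z "z - w"] assms by simp
qed

lemma complex_matrix_vector_mult_scaleR: "(A::complex^'n^'m) *v (r *\<^sub>R x) = r *\<^sub>R (A *v x)"
  unfolding vec_eq_iff matrix_vector_mult_def
  by (simp only: vector_scaleR_component vec_lambda_beta)
     (simp add: scaleR_conv_of_real sum_distrib_left algebra_simps)

lemma Re_hinner_skew_hermitian:
  assumes "skew_hermitian \<Omega>"
  shows "Re (hinner z (\<Omega> *v z)) = 0"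
proof -
  have "cnj (hinner z (\<Omega> *v z)) = (\<Sum>a\<in>UNIV. \<Sum>b\<in>UNIV. z$a * cnj (\<Omega>$a$b) * cnj (z$b))"
    unfolding hinner_def matrix_vector_mult_def by (simp add: sum_distrib_left algebra_simps)
  also have "\<dots> = (\<Sum>a\<in>UNIV. \<Sum>b\<in>UNIV. - (cnj (z$b) * \<Omega>$b$a * z$a))"
    using assms unfolding skew_hermitian_def
    by (intro sum.cong refl) (metis complex_cnj_cnj complex_cnj_minus mult.commute
        mult.left_commute mult_minus_left mult_minus_right)
  also have "\<dots> = - hinner z (\<Omega> *v z)"
    unfolding hinner_def matrix_vector_mult_def
    by (subst sum.swap) (simp add: sum_negf sum_distrib_left algebra_simps)
  finally have "Re (cnj (hinner z (\<Omega> *v z))) = Re (- hinner z (\<Omega> *v z))" by simp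
  then show ?thesis by simp
qed

lemma sum_eq_scaleR_centroid: "(\<Sum>k<N. z k) = real N *\<^sub>R centroid N z"
  unfolding centroid_def by (cases "N = 0") simp_all

lemma sum_norm_diff_sq_eq:
  fixes z :: "nat \<Rightarrow> 'a::real_inner"
  assumes unit: "\<And>k. k < N \<Longrightarrow> norm (z k) = 1" and sum: "(\<Sum>k<N. z k) = real N *\<^sub>R c"
  shows "(\<Sum>k<N. (norm (z k - c))\<^sup>2) = real N * (1 - (norm c)\<^sup>2)"
proof -
  have "(\<Sum>k<N. (norm (z k - c))\<^sup>2) = (\<Sum>k<N. 1 - 2 * (z k \<bullet> c) + (norm c)\<^sup>2)"
    using unit by (intro sum.cong)
      (auto simp: power2_norm_eq_inner inner_diff_left inner_diff_right inner_commute norm_eq_1)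
  also have "\<dots> = real N - 2 * ((\<Sum>k<N. z k) \<bullet> c) + real N * (norm c)\<^sup>2"
    by (simp add: sum.distrib sum_subtractf inner_sum_left sum_distrib_left)
  also have "\<dots> = real N * (1 - (norm c)\<^sup>2)"
    unfolding sum by (simp add: power2_norm_eq_inner algebra_simps)
  finally show ?thesis .
qed

lemma sum_sq_deficit_ge:
  fixes a :: "nat \<Rightarrow> real"
  assumes bound: "\<And>j. j < N \<Longrightarrow> \<bar>a j\<bar> \<le> \<rho>" and sum: "(\<Sum>j<N. a j) = N * \<rho>\<^sup>2"
  shows "N * \<rho>\<^sup>2 * (N * \<rho> - N + 2) * (1 - \<rho>) \<le> (\<Sum>j<N. \<rho>\<^sup>2 - (a j)\<^sup>2)"
proof -
  define \<delta> where "\<delta> = \<rho> * (N * \<rho> - N + 2)"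
  have "\<rho>\<^sup>2 - (a j)\<^sup>2 \<ge> (\<rho> - a j) * \<delta>" if j: "j < N" for j
  proof -
    have "(\<Sum>k\<in>{..<N}-{j}. a k) \<le> (\<Sum>k\<in>{..<N}-{j}. \<rho>)"
      by (rule sum_mono) (use bound in force)
    also have "\<dots> = (real N - 1) * \<rho>"
      using j by (simp add: card_Diff_singleton of_nat_diff)
    finally have "(\<Sum>k\<in>{..<N}-{j}. a k) \<le> (real N - 1) * \<rho>" .
    moreover have "(\<Sum>k<N. a k) = a j + (\<Sum>k\<in>{..<N}-{j}. a k)"
      using j by (simp add: sum.remove)
    ultimately have "a j \<ge> N * \<rho>\<^sup>2 - (real N - 1) * \<rho>"
      using sum by simp
    then have "\<rho> + a j \<ge> \<delta>"
      unfolding \<delta>_def by (simp add: algebra_simps power2_eq_square)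
    moreover have "\<rho> - a j \<ge> 0" using bound[OF j] by simp
    ultimately have "(\<rho> - a j) * (\<rho> + a j) \<ge> (\<rho> - a j) * \<delta>"
      by (simp add: mult_left_mono)
    then show ?thesis by (simp add: power2_eq_square algebra_simps)
  qed
  then have "(\<Sum>j<N. (\<rho> - a j) * \<delta>) \<le> (\<Sum>j<N. \<rho>\<^sup>2 - (a j)\<^sup>2)"
    by (intro sum_mono) auto
  moreover have "(\<Sum>j<N. (\<rho> - a j) * \<delta>) = N * \<rho>\<^sup>2 * (N * \<rho> - N + 2) * (1 - \<rho>)"
    unfolding sum_distrib_right[symmetric] sum_subtractf sum \<delta>_def
    by (simp add: power2_eq_square algebra_simps)
  ultimately show ?thesis by simp
qed

lemma Re_hinner_lohe_rhs_self:
  assumes "skew_hermitian \<Omega>"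
  shows "Re (hinner (Z j) (lohe_rhs \<Omega> \<kappa>0 \<kappa>1 N Z j)) = 0"
proof -
  define g where "g = hinner (Z j) (centroid N Z)"
  have "hinner (centroid N Z) (Z j) = cnj g" unfolding g_def by (simp add: cnj_hinner)
  then have "Re (hinner (Z j) (lohe_rhs \<Omega> \<kappa>0 \<kappa>1 N Z j)) =
      Re (hinner (Z j) (\<Omega> *v Z j))
      + Re (of_real \<kappa>0 * (of_real ((norm (Z j))\<^sup>2) * g - cnj g * of_real ((norm (Z j))\<^sup>2)))
      + Re (of_real \<kappa>1 * (g - cnj g) * of_real ((norm (Z j))\<^sup>2))"
    unfolding lohe_rhs_def Let_def
    by (simp only: hinner_add_right hinner_diff_right hinner_smult_right g_def[symmetric]
        hinner_self plus_complex.sel)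
  also have "\<dots> = 0" using Re_hinner_skew_hermitian[OF assms] by simp
  finally show ?thesis .
qed

lemma Re_hinner_centroid_lohe_rhs:
  fixes N :: nat and Z :: "nat \<Rightarrow> complex^'d"
  assumes "norm (Z j) = 1"
  defines "c \<equiv> centroid N Z" and "h \<equiv> hinner (centroid N Z) (Z j)"
  shows "Re (hinner c (lohe_rhs \<Omega> \<kappa>0 \<kappa>1 N Z j)) = Re (hinner c (\<Omega> *v Z j))
    + \<kappa>0 * ((norm c)\<^sup>2 - (Re h)\<^sup>2 + (Im h)\<^sup>2) + 2 * \<kappa>1 * (Im h)\<^sup>2"
proof -
  have h: "hinner c (Z j) = h" unfolding h_def c_def ..
  have "hinner (Z j) c = cnj h" unfolding h_def c_def by (simp add: cnj_hinner)
  with h have "Re (hinner c (lohe_rhs \<Omega> \<kappa>0 \<kappa>1 N Z j)) = Re (hinner c (\<Omega> *v Z j))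
      + Re (of_real \<kappa>0 * (1 * of_real ((norm c)\<^sup>2) - h * h)) + Re (of_real \<kappa>1 * (cnj h - h) * h)"
    unfolding lohe_rhs_def Let_def c_def[symmetric]
    by (simp only: hinner_add_right hinner_diff_right hinner_smult_right hinner_self assms(1)
        plus_complex.sel) simp
  also have "\<dots> = Re (hinner c (\<Omega> *v Z j))
      + \<kappa>0 * ((norm c)\<^sup>2 - (Re h)\<^sup>2 + (Im h)\<^sup>2) + 2 * \<kappa>1 * (Im h)\<^sup>2"
    by (simp add: power2_eq_square algebra_simps)
  finally show ?thesis .
qed

lemma sum_Re_hinner_centroid_skew_hermitian:
  assumes "skew_hermitian \<Omega>"
  shows "(\<Sum>j<N. Re (hinner (centroid N Z) (\<Omega> *v Z j))) = 0"
proof -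
  have "(\<Sum>j<N. hinner (centroid N Z) (\<Omega> *v Z j))
      = of_real (real N) * hinner (centroid N Z) (\<Omega> *v centroid N Z)"
    unfolding hinner_sum_right[symmetric] vec.sum[symmetric] sum_eq_scaleR_centroid
    by (simp only: complex_matrix_vector_mult_scaleR hinner_scaleR_right)
  then have "(\<Sum>j<N. Re (hinner (centroid N Z) (\<Omega> *v Z j)))
      = real N * Re (hinner (centroid N Z) (\<Omega> *v centroid N Z))"
    unfolding Re_sum[symmetric] by simp
  then show ?thesis using Re_hinner_skew_hermitian[OF assms] by simp
qed

lemma sum_Re_hinner_centroid_lohe_rhs_ge:
  fixes N :: nat and Z :: "nat \<Rightarrow> complex^'d"
  assumes "skew_hermitian \<Omega>" and unit: "\<And>j. j < N \<Longrightarrow> norm (Z j) = 1"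
    and "0 \<le> \<kappa>0" "0 \<le> \<kappa>1"
  defines "c \<equiv> centroid N Z"
  shows "\<kappa>0 * (\<Sum>j<N. (norm c)\<^sup>2 - (c \<bullet> Z j)\<^sup>2)
    \<le> (\<Sum>j<N. Re (hinner c (lohe_rhs \<Omega> \<kappa>0 \<kappa>1 N Z j)))"
proof -
  have "(\<Sum>j<N. Re (hinner c (lohe_rhs \<Omega> \<kappa>0 \<kappa>1 N Z j))) = (\<Sum>j<N. \<kappa>0 * ((norm c)\<^sup>2
      - (c \<bullet> Z j)\<^sup>2 + (Im (hinner c (Z j)))\<^sup>2) + 2 * \<kappa>1 * (Im (hinner c (Z j)))\<^sup>2)"
    using sum_Re_hinner_centroid_skew_hermitian[OF assms(1), of N Z]
    by (simp add: Re_hinner_centroid_lohe_rhs unit sum.distrib c_def Re_hinner[symmetric])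
  also have "\<dots> \<ge> (\<Sum>j<N. \<kappa>0 * ((norm c)\<^sup>2 - (c \<bullet> Z j)\<^sup>2))"
    by (rule sum_mono) (use assms(3,4) in \<open>simp add: algebra_simps\<close>)
  finally show ?thesis by (simp add: sum_distrib_left)
qed

lemma logistic_rate_mono:
  fixes \<kappa> \<rho>0 \<rho> n :: real
  assumes "0 \<le> \<kappa>" "0 \<le> n" "0 \<le> \<rho>0" "\<rho>0 \<le> \<rho>" "\<rho> \<le> 1" "0 \<le> n * \<rho>0 - n + 2"
  shows "\<kappa> * \<rho>0\<^sup>2 * (n * \<rho>0 - n + 2) * (1 - \<rho>\<^sup>2) \<le> 2 * \<kappa> * \<rho>\<^sup>2 * (n * \<rho> - n + 2) * (1 - \<rho>)"
proof -
  have \<delta>: "n * \<rho>0 - n + 2 \<le> n * \<rho> - n + 2"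
    using assms by (simp add: mult_left_mono)
  then have "\<rho>0\<^sup>2 * (n * \<rho>0 - n + 2) \<le> \<rho>\<^sup>2 * (n * \<rho> - n + 2)"
    using assms by (intro mult_mono power_mono) auto
  moreover have "1 - \<rho>\<^sup>2 \<le> 2 * (1 - \<rho>)"
    using zero_le_power2[of "1 - \<rho>"] by (simp add: power2_eq_square algebra_simps)
  moreover have "0 \<le> \<rho>\<^sup>2 * (n * \<rho> - n + 2)"
    using \<delta> assms by simp
  moreover have "0 \<le> 1 - \<rho>\<^sup>2"
    using assms by (simp add: power_le_one)
  ultimately have "\<rho>0\<^sup>2 * (n * \<rho>0 - n + 2) * (1 - \<rho>\<^sup>2) \<le> \<rho>\<^sup>2 * (n * \<rho> - n + 2) * (2 * (1 - \<rho>))"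
    by (rule mult_mono)
  from mult_left_mono[OF this \<open>0 \<le> \<kappa>\<close>] show ?thesis
    by (simp only: mult_ac)
qed

locale lohe_identical_flow =
  fixes \<Omega> :: "complex^'d^'d" and \<kappa>0 \<kappa>1 :: real and N :: nat
    and z :: "real \<Rightarrow> nat \<Rightarrow> complex^'d"
  assumes skew: "skew_hermitian \<Omega>"
    and \<kappa>0_nonneg: "0 \<le> \<kappa>0" and \<kappa>1_nonneg: "0 \<le> \<kappa>1"
    and unit0: "\<And>j. j < N \<Longrightarrow> norm (z 0 j) = 1"
    and solution: "\<And>j t. j < N \<Longrightarrow> 0 \<le> t \<Longrightarrow>
      ((\<lambda>s. z s j) has_vector_derivative lohe_rhs \<Omega> \<kappa>0 \<kappa>1 N (z t) j) (at t within {0..})"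
begin

abbreviation zc :: "real \<Rightarrow> complex^'d" where "zc t \<equiv> centroid N (z t)"

lemma norm_z_eq_1:
  assumes "0 \<le> t" "j < N"
  shows "norm (z t j) = 1"
proof -
  have "((\<lambda>s. z s j \<bullet> z s j) has_real_derivative 0) (at s within {0..})" if "s \<in> {0..}" for s
  proof -
    have "z s j \<bullet> lohe_rhs \<Omega> \<kappa>0 \<kappa>1 N (z s) j = 0"
      using Re_hinner_lohe_rhs_self[OF skew] unfolding Re_hinner .
    with has_vector_derivative_inner_self[OF solution[OF \<open>j < N\<close>, of s]] that
    show ?thesis by simp
  qed
  then obtain k where "\<forall>s\<in>{0..}. z s j \<bullet> z s j = k"
    using has_field_derivative_zero_constant[OF convex_real_interval(1)] by blast
  then have "z t j \<bullet> z t j = z 0 j \<bullet> z 0 j" using \<open>0 \<le> t\<close> by simp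
  then show ?thesis using unit0[OF \<open>j < N\<close>] by (simp add: norm_eq_1)
qed

lemma sum_norm_diff_centroid_sq:
  assumes "0 \<le> t"
  shows "(\<Sum>k<N. (norm (z t k - zc t))\<^sup>2) = N * (1 - (norm (zc t))\<^sup>2)"
  using assms by (intro sum_norm_diff_sq_eq norm_z_eq_1 sum_eq_scaleR_centroid)

lemma norm_centroid_le_1:
  assumes "0 \<le> t"
  shows "norm (zc t) \<le> 1"
proof (cases "N = 0")
  case False
  have "0 \<le> N * (1 - (norm (zc t))\<^sup>2)"
    unfolding sum_norm_diff_centroid_sq[OF assms, symmetric] by (simp add: sum_nonneg)
  then have "(norm (zc t))\<^sup>2 \<le> 1\<^sup>2" using False by (simp add: zero_le_mult_iff)
  then show ?thesis by (rule power2_le_imp_le) simp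
qed (simp add: centroid_def)

lemma abs_inner_centroid_le:
  assumes "0 \<le> t" "j < N"
  shows "\<bar>zc t \<bullet> z t j\<bar> \<le> norm (zc t)"
  using Cauchy_Schwarz_ineq2[of "zc t" "z t j"] norm_z_eq_1[OF assms] by simp

lemma centroid_sq_has_derivative:
  assumes "0 \<le> t"
  shows "((\<lambda>s. (norm (zc s))\<^sup>2) has_real_derivative
    2 / N * (\<Sum>j<N. Re (hinner (zc t) (lohe_rhs \<Omega> \<kappa>0 \<kappa>1 N (z t) j))))
    (at t within {0..})"
proof -
  have "((\<lambda>s. \<Sum>j<N. z s j) has_vector_derivative (\<Sum>j<N. lohe_rhs \<Omega> \<kappa>0 \<kappa>1 N (z t) j))
      (at t within {0..})"
    by (rule has_vector_derivative_sum) (use solution assms in auto)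
  from has_vector_derivative_scaleR[OF DERIV_const[of "1 / real N"] this]
  have "((\<lambda>s. zc s) has_vector_derivative
      (1 / N) *\<^sub>R (\<Sum>j<N. lohe_rhs \<Omega> \<kappa>0 \<kappa>1 N (z t) j)) (at t within {0..})"
    unfolding centroid_def by simp
  from has_vector_derivative_inner_self[OF this] show ?thesis
    by (simp add: power2_norm_eq_inner inner_sum_right Re_hinner)
qed

lemma norm_centroid_mono:
  assumes "0 \<le> s" "s \<le> t"
  shows "norm (zc s) \<le> norm (zc t)"
proof -
  have "(norm (zc s))\<^sup>2 \<le> (norm (zc t))\<^sup>2"
  proof (rule has_real_derivative_nonneg_imp_mono[OF centroid_sq_has_derivative])
    fix \<tau> :: real assume "0 \<le> \<tau>"
    have "(zc \<tau> \<bullet> z \<tau> j)\<^sup>2 \<le> (norm (zc \<tau>))\<^sup>2" if "j < N" for j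
      using abs_inner_centroid_le[OF \<open>0 \<le> \<tau>\<close> that] by (simp add: abs_le_square_iff[symmetric])
    then have "0 \<le> \<kappa>0 * (\<Sum>j<N. (norm (zc \<tau>))\<^sup>2 - (zc \<tau> \<bullet> z \<tau> j)\<^sup>2)"
      using \<kappa>0_nonneg by (intro mult_nonneg_nonneg sum_nonneg) auto
    also have "\<dots> \<le> (\<Sum>j<N. Re (hinner (zc \<tau>) (lohe_rhs \<Omega> \<kappa>0 \<kappa>1 N (z \<tau>) j)))"
      by (rule sum_Re_hinner_centroid_lohe_rhs_ge[OF skew norm_z_eq_1[OF \<open>0 \<le> \<tau>\<close>]
          \<kappa>0_nonneg \<kappa>1_nonneg])
    finally show "0 \<le> 2 / N * (\<Sum>j<N. Re (hinner (zc \<tau>) (lohe_rhs \<Omega> \<kappa>0 \<kappa>1 N (z \<tau>) j)))"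
      by simp
  qed (use assms in auto)
  then show ?thesis by (rule power2_le_imp_le) simp
qed

lemma initial_centroid_bounds:
  assumes "(real N - 2) / N < norm (zc 0)"
  shows "0 < N" and "0 < N * norm (zc 0) - N + 2" and "0 < norm (zc 0)"
proof -
  show "0 < N" using assms by (cases "N = 0") (auto simp: centroid_def)
  then show "0 < N * norm (zc 0) - N + 2"
    using assms by (simp add: pos_divide_less_eq algebra_simps)
  show "0 < norm (zc 0)"
  proof (cases "N = 1")
    case True
    then show ?thesis using unit0[of 0] by (simp add: centroid_def)
  next
    case False
    with \<open>0 < N\<close> have "0 \<le> (real N - 2) / N" by simp
    with assms show ?thesis by linarith
  qed
qed

lemma centroid_sq_rate_ge:
  assumes "(real N - 2) / N < norm (zc 0)" and "0 \<le> t"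
  shows "\<kappa>0 * (norm (zc 0))\<^sup>2 * (N * norm (zc 0) - N + 2) * (1 - (norm (zc t))\<^sup>2)
    \<le> 2 / N * (\<Sum>j<N. Re (hinner (zc t) (lohe_rhs \<Omega> \<kappa>0 \<kappa>1 N (z t) j)))"
proof -
  define \<rho> where "\<rho> = norm (zc t)"
  define S where "S = (\<Sum>j<N. Re (hinner (zc t) (lohe_rhs \<Omega> \<kappa>0 \<kappa>1 N (z t) j)))"
  have "N > 0" and \<delta>0: "0 \<le> N * norm (zc 0) - N + 2"
    using initial_centroid_bounds[OF assms(1)] by auto
  have "(\<Sum>j<N. zc t \<bullet> z t j) = N * \<rho>\<^sup>2"
    by (simp add: inner_sum_right[symmetric] sum_eq_scaleR_centroid \<rho>_def power2_norm_eq_inner)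
  then have "N * \<rho>\<^sup>2 * (N * \<rho> - N + 2) * (1 - \<rho>) \<le> (\<Sum>j<N. \<rho>\<^sup>2 - (zc t \<bullet> z t j)\<^sup>2)"
    using abs_inner_centroid_le[OF \<open>0 \<le> t\<close>] unfolding \<rho>_def by (intro sum_sq_deficit_ge)
  then have "\<kappa>0 * (N * \<rho>\<^sup>2 * (N * \<rho> - N + 2) * (1 - \<rho>))
      \<le> \<kappa>0 * (\<Sum>j<N. \<rho>\<^sup>2 - (zc t \<bullet> z t j)\<^sup>2)"
    using \<kappa>0_nonneg by (rule mult_left_mono)
  also have "\<dots> \<le> S"
    unfolding S_def \<rho>_def
    by (rule sum_Re_hinner_centroid_lohe_rhs_ge[OF skew norm_z_eq_1[OF \<open>0 \<le> t\<close>]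
        \<kappa>0_nonneg \<kappa>1_nonneg])
  finally have "2 / N * (\<kappa>0 * (N * \<rho>\<^sup>2 * (N * \<rho> - N + 2) * (1 - \<rho>))) \<le> 2 / N * S"
    by (rule mult_left_mono) simp
  moreover have "2 / N * (\<kappa>0 * (N * \<rho>\<^sup>2 * (N * \<rho> - N + 2) * (1 - \<rho>)))
      = 2 * \<kappa>0 * \<rho>\<^sup>2 * (N * \<rho> - N + 2) * (1 - \<rho>)"
    using \<open>N > 0\<close> by simp
  moreover have "\<kappa>0 * (norm (zc 0))\<^sup>2 * (N * norm (zc 0) - N + 2) * (1 - \<rho>\<^sup>2)
      \<le> 2 * \<kappa>0 * \<rho>\<^sup>2 * (N * \<rho> - N + 2) * (1 - \<rho>)"
    unfolding \<rho>_def
    by (rule logistic_rate_mono[OF \<kappa>0_nonneg of_nat_0_le_iff norm_ge_zero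
          norm_centroid_mono[OF order_refl \<open>0 \<le> t\<close>] norm_centroid_le_1[OF \<open>0 \<le> t\<close>] \<delta>0])
  ultimately show ?thesis unfolding S_def \<rho>_def by linarith
qed

lemma centroid_sq_deficit_decay:
  assumes "(real N - 2) / N < norm (zc 0)" and "0 \<le> t"
  shows "1 - (norm (zc t))\<^sup>2
    \<le> exp (- (\<kappa>0 * (norm (zc 0))\<^sup>2 * (N * norm (zc 0) - N + 2)) * t)"
proof -
  define c where "c = \<kappa>0 * (norm (zc 0))\<^sup>2 * (N * norm (zc 0) - N + 2)"
  have "1 - (norm (zc t))\<^sup>2 \<le> (1 - (norm (zc 0))\<^sup>2) * exp (- c * t)"
  proof (rule has_real_derivative_le_linear_imp_exp_decay[where V' = "\<lambda>\<tau>.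
      - (2 / N * (\<Sum>j<N. Re (hinner (zc \<tau>) (lohe_rhs \<Omega> \<kappa>0 \<kappa>1 N (z \<tau>) j))))"])
    fix \<tau> :: real assume "0 \<le> \<tau>"
    show "((\<lambda>s. 1 - (norm (zc s))\<^sup>2) has_real_derivative
        - (2 / N * (\<Sum>j<N. Re (hinner (zc \<tau>) (lohe_rhs \<Omega> \<kappa>0 \<kappa>1 N (z \<tau>) j)))))
        (at \<tau> within {0..})"
      using DERIV_diff[OF DERIV_const[of 1] centroid_sq_has_derivative[OF \<open>0 \<le> \<tau>\<close>]] by simp
    show "- (2 / N * (\<Sum>j<N. Re (hinner (zc \<tau>) (lohe_rhs \<Omega> \<kappa>0 \<kappa>1 N (z \<tau>) j))))
        \<le> - c * (1 - (norm (zc \<tau>))\<^sup>2)"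
      unfolding c_def mult_minus_left neg_le_iff_le
      by (rule centroid_sq_rate_ge[OF assms(1) \<open>0 \<le> \<tau>\<close>])
  qed (fact \<open>0 \<le> t\<close>)
  also have "\<dots> \<le> exp (- c * t)"
    using mult_right_mono[of "1 - (norm (zc 0))\<^sup>2" 1 "exp (- c * t)"] by simp
  finally show ?thesis unfolding c_def .
qed

lemma norm_diff_le_centroid_deficit:
  assumes "0 \<le> t" "i < N" "j < N"
  shows "norm (z t i - z t j) \<le> 2 * sqrt (N * (1 - (norm (zc t))\<^sup>2))"
proof -
  have close: "norm (z t k - zc t) \<le> sqrt (N * (1 - (norm (zc t))\<^sup>2))" if "k < N" for k
  proof (rule real_le_rsqrt)
    have "(norm (z t k - zc t))\<^sup>2 \<le> (\<Sum>l<N. (norm (z t l - zc t))\<^sup>2)"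
      by (rule member_le_sum) (use that in auto)
    then show "(norm (z t k - zc t))\<^sup>2 \<le> N * (1 - (norm (zc t))\<^sup>2)"
      unfolding sum_norm_diff_centroid_sq[OF \<open>0 \<le> t\<close>] .
  qed
  have "norm (z t i - z t j) \<le> norm (z t i - zc t) + norm (z t j - zc t)"
    using norm_triangle_ineq4[of "z t i - zc t" "z t j - zc t"] by simp
  with close[OF \<open>i < N\<close>] close[OF \<open>j < N\<close>] show ?thesis by linarith
qed

end

lemma sqrt_exp: "sqrt (exp x) = exp (x / 2)"
  by (rule real_sqrt_unique) (simp_all add: power2_eq_square exp_add[symmetric])

theorem theorem3p4:
  fixes N :: nat and \<Omega> :: "complex^'d^'d" and \<kappa>0 \<kappa>1 :: real
    and z :: "real \<Rightarrow> nat \<Rightarrow> complex^'d"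
  assumes skew: "skew_hermitian \<Omega>"
    and k1pos: "0 < \<kappa>1" and k1k0: "\<kappa>1 < \<kappa>0 / 4"
    and unit0: "\<forall>j<N. norm (z 0 j) = 1"
    and rho0: "norm (centroid N (z 0)) > (real N - 2) / real N"
    and sol: "\<forall>j<N. \<forall>t\<ge>0.
      ((\<lambda>s. z s j) has_vector_derivative lohe_rhs \<Omega> \<kappa>0 \<kappa>1 N (z t) j) (at t within {0..})"
  shows "\<exists>C r. C > 0 \<and> r > 0 \<and>
           (\<forall>t\<ge>0. \<forall>i<N. \<forall>j<N. cmod (1 - hinner (z t i) (z t j)) \<le> C * exp (- r * t))
         \<and> (\<exists>D \<mu>. D > 0 \<and> \<mu> > 0 \<and>
              (\<forall>t\<ge>0. \<forall>i<N. \<forall>j<N. norm (z t i - z t j) \<le> D * exp (- \<mu> * t)))"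
proof -
  \<comment> \<open>The bound \<open>\<kappa>\<^sub>1 < \<kappa>\<^sub>0 / 4\<close> is only needed through \<open>\<kappa>\<^sub>0 > 0\<close>.\<close>
  have "0 < \<kappa>0" using k1pos k1k0 by simp
  interpret lohe_identical_flow \<Omega> \<kappa>0 \<kappa>1 N z
    using skew k1pos \<open>0 < \<kappa>0\<close> unit0 sol by unfold_locales auto
  define c where "c = \<kappa>0 * (norm (zc 0))\<^sup>2 * (N * norm (zc 0) - N + 2)"
  have "0 < N" and "0 < c"
    using initial_centroid_bounds[OF rho0] \<open>0 < \<kappa>0\<close> unfolding c_def by auto
  have dist: "norm (z t i - z t j) \<le> 2 * sqrt N * exp (- (c / 2) * t)"
    if "0 \<le> t" "i < N" "j < N" for t i j
  proof -
    have "N * (1 - (norm (zc t))\<^sup>2) \<le> N * exp (- c * t)"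
      using centroid_sq_deficit_decay[OF rho0 \<open>0 \<le> t\<close>] unfolding c_def
      by (intro mult_left_mono) auto
    then have "sqrt (N * (1 - (norm (zc t))\<^sup>2)) \<le> sqrt (N * exp (- c * t))"
      by (rule real_sqrt_le_mono)
    then have "norm (z t i - z t j) \<le> 2 * sqrt (N * exp (- c * t))"
      using norm_diff_le_centroid_deficit[OF that] by linarith
    then show ?thesis by (simp add: real_sqrt_mult sqrt_exp)
  qed
  have "cmod (1 - hinner (z t i) (z t j)) \<le> 2 * sqrt N * exp (- (c / 2) * t)"
    if "0 \<le> t" "i < N" "j < N" for t i j
    using norm_one_minus_hinner_le[OF norm_z_eq_1[OF that(1,2)], of "z t j"] dist[OF that] by linarith
  with dist \<open>0 < N\<close> \<open>0 < c\<close> show ?thesis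
    by (intro exI[of _ "2 * sqrt N"] exI[of _ "c / 2"] conjI) auto
qed

end
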